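(* Let $G$ be a finite metabelian group and $N$ a normal subgroup of $G$. Let $B$ be an abelian subgroup of $N$ of maximal order among abelian subgroups of $N$. Then $G$ contains a normal abelian subgroup $C$ with $C\le\langle B^G\rangle\le N$ and $|C|=|B|$.
   Context: A group is metabelian if its derived subgroup $[G,G]$ is abelian. $\langle B^G\rangle$ denotes the normal closure of $B$ in $G$, i.e. the subgroup generated by all conjugates $g^{-1}Bg$, $g\in G$. *)

theory Defs
  imports "HOL-Algebra.Algebra"
begin

definition metabelian :: "('a, 'b) monoid_scheme \<Rightarrow> bool" where
  "metabelian G \<longleftrightarrow> group G \<and>
     (\<forall>x \<in> derived G (carrier G). \<forall>y \<in> derived G (carrier G). x \<otimes>\<^bsub>G\<^esub> y = y \<otimes>\<^bsub>G\<^esub> x)"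

definition normal_closure :: "('a, 'b) monoid_scheme \<Rightarrow> 'a set \<Rightarrow> 'a set" where
  "normal_closure G B =
     generate G (\<Union>g \<in> carrier G. (\<lambda>b. inv\<^bsub>G\<^esub> g \<otimes>\<^bsub>G\<^esub> b \<otimes>\<^bsub>G\<^esub> g) ` B)"

definition abelian_set :: "('a, 'b) monoid_scheme \<Rightarrow> 'a set \<Rightarrow> bool" where
  "abelian_set G H \<longleftrightarrow> (\<forall>x \<in> H. \<forall>y \<in> H. x \<otimes>\<^bsub>G\<^esub> y = y \<otimes>\<^bsub>G\<^esub> x)"

end

theory Submission
  imports Defs
begin

text \<open>Let \<open>D = [B,G]\<close>. It lies in \<open>[G,G]\<close>, so it is abelian, and it lies in the normal closure
  of \<open>B\<close>. For \<open>B \<inter> D \<le> E \<le> D\<close> put \<open>w(E) = |C\<^sub>B(E)| |E|\<close>. The product \<open>C\<^sub>B(E) E\<close> is an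
  abelian subgroup of \<open>N\<close> meeting \<open>C\<^sub>B(E)\<close> and \<open>E\<close> in \<open>B \<inter> D\<close>, so maximality of \<open>B\<close> gives
  \<open>w(E) \<le> |B| |B \<inter> D|\<close>. Since \<open>w\<close> is supermodular, the subgroups \<open>E\<close> attaining this bound are
  closed under products. For every \<open>g\<close> the subgroup \<open>D \<inter> \<langle>B, B\<^sup>g\<rangle>\<close> attains it, because
  \<open>B \<inter> B\<^sup>g\<close> centralizes it, and it contains every commutator \<open>[b,g]\<close>. Multiplying these
  subgroups over all \<open>g\<close> shows that \<open>D\<close> itself attains the bound, i.e. \<open>C = C\<^sub>B(D) D\<close> has
  order \<open>|B|\<close>; it is abelian, and normal because \<open>D\<close> is normal and \<open>[B,G] \<le> D\<close>.\<close>

section \<open>Products of subgroups\<close>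

context group
begin

lemma mult_inv_cancel_left:
  "x \<in> carrier G \<Longrightarrow> y \<in> carrier G \<Longrightarrow> x \<otimes> (inv x \<otimes> y) = y"
  by (metis inv_closed m_assoc r_inv l_one)

lemma inv_mult_cancel_left:
  "x \<in> carrier G \<Longrightarrow> y \<in> carrier G \<Longrightarrow> inv x \<otimes> (x \<otimes> y) = y"
  by (metis inv_closed m_assoc l_inv l_one)

lemmas group_cancel_simps = m_assoc mult_inv_cancel_left inv_mult_cancel_left inv_mult_group

lemma card_set_mult_fibre:
  assumes H: "subgroup H G" and K: "subgroup K G" and x: "x \<in> H <#> K"
  shows "card {p \<in> H \<times> K. fst p \<otimes> snd p = x} = card (H \<inter> K)"
proof -
  have HG: "H \<subseteq> carrier G" and KG: "K \<subseteq> carrier G"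
    using H K subgroup.subset by auto
  obtain h0 k0 where h0: "h0 \<in> H" and k0: "k0 \<in> K" and x_eq: "x = h0 \<otimes> k0"
    using x unfolding set_mult_def by auto
  have "bij_betw (\<lambda>t. (h0 \<otimes> t, inv t \<otimes> k0)) (H \<inter> K) {p \<in> H \<times> K. fst p \<otimes> snd p = x}"
  proof (rule bij_betwI')
    fix s t assume "s \<in> H \<inter> K" "t \<in> H \<inter> K"
    then have "h0 \<in> carrier G" "s \<in> carrier G" "t \<in> carrier G"
      using h0 HG by auto
    then show "((h0 \<otimes> s, inv s \<otimes> k0) = (h0 \<otimes> t, inv t \<otimes> k0)) = (s = t)"
      using l_cancel by blast
  next
    fix t assume t: "t \<in> H \<inter> K"
    then have "h0 \<otimes> t \<in> H" and "inv t \<otimes> k0 \<in> K"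
      using h0 k0 H K by (auto intro: subgroup.m_closed subgroup.m_inv_closed)
    moreover have "h0 \<otimes> t \<otimes> (inv t \<otimes> k0) = x"
    proof -
      have "h0 \<in> carrier G" "t \<in> carrier G" "k0 \<in> carrier G"
        using t h0 k0 HG KG by auto
      then show ?thesis
        using x_eq by (simp add: group_cancel_simps)
    qed
    ultimately show "(h0 \<otimes> t, inv t \<otimes> k0) \<in> {p \<in> H \<times> K. fst p \<otimes> snd p = x}"
      by simp
  next
    fix p assume "p \<in> {p \<in> H \<times> K. fst p \<otimes> snd p = x}"
    then obtain h k where p: "p = (h, k)" and h: "h \<in> H" and k: "k \<in> K" and hk: "h \<otimes> k = x"
      by auto
    have hG: "h \<in> carrier G" and kG: "k \<in> carrier G" and h0G: "h0 \<in> carrier G" and k0G: "k0 \<in> carrier G"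
      using h k h0 k0 HG KG by auto
    define t where "t = inv h0 \<otimes> h"
    have t_alt: "t = k0 \<otimes> inv k"
    proof -
      have "inv h0 \<otimes> (h0 \<otimes> k0) \<otimes> inv k = inv h0 \<otimes> (h \<otimes> k) \<otimes> inv k"
        using hk x_eq by simp
      then show ?thesis
        unfolding t_def using hG kG h0G k0G by (simp add: group_cancel_simps)
    qed
    have "t \<in> H"
      unfolding t_def using h h0 H by (auto intro: subgroup.m_closed subgroup.m_inv_closed)
    moreover have "t \<in> K"
      unfolding t_alt using k k0 K by (auto intro: subgroup.m_closed subgroup.m_inv_closed)
    moreover have "h0 \<otimes> t = h"
      unfolding t_def using hG h0G by (simp add: group_cancel_simps)
    moreover have "inv t \<otimes> k0 = k"
      unfolding t_alt using kG k0G by (simp add: group_cancel_simps)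
    ultimately show "\<exists>t\<in>H \<inter> K. p = (h0 \<otimes> t, inv t \<otimes> k0)"
      using p by blast
  qed
  then show ?thesis
    by (simp add: bij_betw_same_card)
qed

lemma card_set_mult_mult_card_Int:
  assumes H: "subgroup H G" and K: "subgroup K G" and fin: "finite (carrier G)"
  shows "card (H <#> K) * card (H \<inter> K) = card H * card K"
proof -
  define fibre where "fibre x = {p \<in> H \<times> K. fst p \<otimes> snd p = x}" for x
  have HG: "H \<subseteq> carrier G" and KG: "K \<subseteq> carrier G"
    using H K subgroup.subset by auto
  have fin_HK: "finite (H \<times> K)"
    using finite_subset[OF HG fin] finite_subset[OF KG fin] by simp
  have fin_mult: "finite (H <#> K)"
    using finite_subset[OF setmult_subset_G[OF HG KG] fin] .
  have "H \<times> K = (\<Union>x\<in>H <#> K. fibre x)"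
  proof
    show "H \<times> K \<subseteq> (\<Union>x\<in>H <#> K. fibre x)"
    proof
      fix p assume p: "p \<in> H \<times> K"
      then have "fst p \<otimes> snd p \<in> H <#> K"
        unfolding set_mult_def by (auto simp: mem_Times_iff)
      with p show "p \<in> (\<Union>x\<in>H <#> K. fibre x)"
        unfolding fibre_def by blast
    qed
  qed (auto simp: fibre_def)
  then have "card H * card K = card (\<Union>x\<in>H <#> K. fibre x)"
    by (metis card_cartesian_product)
  also have "\<dots> = (\<Sum>x\<in>H <#> K. card (fibre x))"
  proof (rule card_UN_disjoint[OF fin_mult])
    show "\<forall>x\<in>H <#> K. finite (fibre x)"
      unfolding fibre_def using fin_HK by simp
    show "\<forall>x\<in>H <#> K. \<forall>y\<in>H <#> K. x \<noteq> y \<longrightarrow> fibre x \<inter> fibre y = {}"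
      unfolding fibre_def by blast
  qed
  also have "\<dots> = (\<Sum>x\<in>H <#> K. card (H \<inter> K))"
    unfolding fibre_def using card_set_mult_fibre[OF H K] by simp
  finally show ?thesis
    by simp
qed

lemma subgroup_set_mult_normalizing:
  assumes H: "subgroup H G" and K: "subgroup K G"
    and normalizes: "\<And>h k. h \<in> H \<Longrightarrow> k \<in> K \<Longrightarrow> h \<otimes> k \<otimes> inv h \<in> K"
  shows "subgroup (H <#> K) G"
proof (rule subgroupI)
  have HG: "H \<subseteq> carrier G" and KG: "K \<subseteq> carrier G"
    using H K subgroup.subset by auto
  show "H <#> K \<subseteq> carrier G"
    by (rule setmult_subset_G[OF HG KG])
  have "\<one> \<otimes> \<one> \<in> H <#> K"
    unfolding set_mult_def using subgroup.one_closed[OF H] subgroup.one_closed[OF K] by blast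
  then show "H <#> K \<noteq> {}"
    by blast
next
  fix x assume "x \<in> H <#> K"
  then obtain h k where h: "h \<in> H" and k: "k \<in> K" and x: "x = h \<otimes> k"
    unfolding set_mult_def by auto
  have "h \<in> carrier G" "k \<in> carrier G"
    using h k subgroup.subset[OF H] subgroup.subset[OF K] by auto
  then have "inv x = inv h \<otimes> (h \<otimes> inv k \<otimes> inv h)"
    using x by (simp add: group_cancel_simps)
  moreover have "inv h \<in> H" and "h \<otimes> inv k \<otimes> inv h \<in> K"
    using h k H K by (auto intro!: normalizes subgroup.m_inv_closed)
  ultimately show "inv x \<in> H <#> K"
    unfolding set_mult_def by blast
next
  fix x y assume "x \<in> H <#> K" "y \<in> H <#> K"
  then obtain h k h' k' where h: "h \<in> H" and k: "k \<in> K" and x: "x = h \<otimes> k"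
    and h': "h' \<in> H" and k': "k' \<in> K" and y: "y = h' \<otimes> k'"
    unfolding set_mult_def by auto
  have "h \<in> carrier G" "k \<in> carrier G" "h' \<in> carrier G" "k' \<in> carrier G"
    using h k h' k' subgroup.subset[OF H] subgroup.subset[OF K] by auto
  then have "x \<otimes> y = (h \<otimes> h') \<otimes> ((inv h' \<otimes> k \<otimes> inv (inv h')) \<otimes> k')"
    using x y by (simp add: group_cancel_simps)
  moreover have "h \<otimes> h' \<in> H"
    using h h' by (rule subgroup.m_closed[OF H])
  moreover have "(inv h' \<otimes> k \<otimes> inv (inv h')) \<otimes> k' \<in> K"
    using h' k k' by (intro subgroup.m_closed[OF K] normalizes subgroup.m_inv_closed[OF H])
  ultimately show "x \<otimes> y \<in> H <#> K"
    unfolding set_mult_def by blast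
qed

lemma subgroup_set_mult_commuting:
  assumes H: "subgroup H G" and K: "subgroup K G"
    and commute: "\<And>h k. h \<in> H \<Longrightarrow> k \<in> K \<Longrightarrow> h \<otimes> k = k \<otimes> h"
  shows "subgroup (H <#> K) G"
proof (rule subgroup_set_mult_normalizing[OF H K])
  fix h k assume h: "h \<in> H" and k: "k \<in> K"
  then have "h \<in> carrier G" "k \<in> carrier G"
    using subgroup.subset[OF H] subgroup.subset[OF K] by auto
  then have "h \<otimes> k \<otimes> inv h = k"
    using commute[OF h k] by (simp add: group_cancel_simps)
  then show "h \<otimes> k \<otimes> inv h \<in> K"
    using k by simp
qed

lemma set_mult_subset_subgroup:
  assumes "subgroup S G" and "H \<subseteq> S" and "K \<subseteq> S"
  shows "H <#> K \<subseteq> S"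
  using assms subgroup.m_closed unfolding set_mult_def by fastforce

lemma subset_set_mult_left:
  assumes "H \<subseteq> carrier G" and "subgroup K G"
  shows "H \<subseteq> H <#> K"
proof
  fix h assume "h \<in> H"
  moreover have "h = h \<otimes> \<one>"
    using \<open>h \<in> H\<close> assms(1) by auto
  ultimately show "h \<in> H <#> K"
    unfolding set_mult_def using subgroup.one_closed[OF assms(2)] by blast
qed

lemma subset_set_mult_right:
  assumes "K \<subseteq> carrier G" and "subgroup H G"
  shows "K \<subseteq> H <#> K"
proof
  fix k assume "k \<in> K"
  moreover have "k = \<one> \<otimes> k"
    using \<open>k \<in> K\<close> assms(1) by auto
  ultimately show "k \<in> H <#> K"
    unfolding set_mult_def using subgroup.one_closed[OF assms(2)] by blast
qed

lemma abelian_set_set_mult: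
  assumes HG: "H \<subseteq> carrier G" and KG: "K \<subseteq> carrier G"
    and "abelian_set G H" and "abelian_set G K"
    and commute: "\<And>h k. h \<in> H \<Longrightarrow> k \<in> K \<Longrightarrow> h \<otimes> k = k \<otimes> h"
  shows "abelian_set G (H <#> K)"
  unfolding abelian_set_def
proof (intro ballI)
  fix x y assume "x \<in> H <#> K" "y \<in> H <#> K"
  then obtain h k h' k' where h: "h \<in> H" and k: "k \<in> K" and x: "x = h \<otimes> k"
    and h': "h' \<in> H" and k': "k' \<in> K" and y: "y = h' \<otimes> k'"
    unfolding set_mult_def by auto
  have G: "h \<in> carrier G" "k \<in> carrier G" "h' \<in> carrier G" "k' \<in> carrier G"
    using h k h' k' HG KG by auto
  have "x \<otimes> y = h \<otimes> (k \<otimes> h') \<otimes> k'"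
    using x y G by (simp add: m_assoc)
  also have "\<dots> = (h \<otimes> h') \<otimes> (k \<otimes> k')"
    using commute[OF h' k, symmetric] G by (simp add: m_assoc)
  also have "\<dots> = (h' \<otimes> h) \<otimes> (k' \<otimes> k)"
    using assms(3,4) h k h' k' unfolding abelian_set_def by simp
  also have "\<dots> = h' \<otimes> (h \<otimes> k') \<otimes> k"
    using G by (simp add: m_assoc)
  also have "\<dots> = y \<otimes> x"
    using commute[OF h k'] x y G by (simp add: m_assoc)
  finally show "x \<otimes> y = y \<otimes> x" .
qed

section \<open>Centralizers\<close>

definition centralizer_in :: "'a set \<Rightarrow> 'a set \<Rightarrow> 'a set"
  where "centralizer_in B E = {c \<in> B. \<forall>e\<in>E. c \<otimes> e = e \<otimes> c}"

lemma centralizer_in_subset: "centralizer_in B E \<subseteq> B"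
  unfolding centralizer_in_def by auto

lemma centralizer_in_antimono: "E \<subseteq> E' \<Longrightarrow> centralizer_in B E' \<subseteq> centralizer_in B E"
  unfolding centralizer_in_def by auto

lemma subgroup_centralizer_in:
  assumes B: "subgroup B G" and EG: "E \<subseteq> carrier G"
  shows "subgroup (centralizer_in B E) G"
proof (rule subgroupI)
  show "centralizer_in B E \<subseteq> carrier G"
    using subgroup.subset[OF B] centralizer_in_subset by blast
  have "\<one> \<in> centralizer_in B E"
    unfolding centralizer_in_def using subgroup.one_closed[OF B] EG by auto
  then show "centralizer_in B E \<noteq> {}"
    by blast
next
  fix c assume c: "c \<in> centralizer_in B E"
  then have cG: "c \<in> carrier G"
    using subgroup.subset[OF B] centralizer_in_subset by blast
  have "inv c \<otimes> e = e \<otimes> inv c" if e: "e \<in> E" for e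
  proof -
    have eG: "e \<in> carrier G"
      using e EG by blast
    have "inv c \<otimes> e = inv c \<otimes> (e \<otimes> c) \<otimes> inv c"
      using cG eG by (simp add: group_cancel_simps)
    also have "\<dots> = inv c \<otimes> (c \<otimes> e) \<otimes> inv c"
      using c e unfolding centralizer_in_def by simp
    also have "\<dots> = e \<otimes> inv c"
      using cG eG by (simp add: group_cancel_simps)
    finally show ?thesis .
  qed
  then show "inv c \<in> centralizer_in B E"
    using c subgroup.m_inv_closed[OF B] unfolding centralizer_in_def by auto
next
  fix c d assume c: "c \<in> centralizer_in B E" and d: "d \<in> centralizer_in B E"
  then have cG: "c \<in> carrier G" and dG: "d \<in> carrier G"
    using subgroup.subset[OF B] centralizer_in_subset by blast+
  have "c \<otimes> d \<otimes> e = e \<otimes> (c \<otimes> d)" if e: "e \<in> E" for e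
  proof -
    have eG: "e \<in> carrier G"
      using e EG by blast
    have "c \<otimes> d \<otimes> e = c \<otimes> (e \<otimes> d)"
      using d e cG dG eG unfolding centralizer_in_def by (simp add: m_assoc)
    also have "\<dots> = e \<otimes> (c \<otimes> d)"
      using c e cG dG eG unfolding centralizer_in_def by (simp add: m_assoc[symmetric])
    finally show ?thesis .
  qed
  then show "c \<otimes> d \<in> centralizer_in B E"
    using c d subgroup.m_closed[OF B] unfolding centralizer_in_def by auto
qed

lemma centralizer_in_set_mult:
  assumes BG: "B \<subseteq> carrier G" and E: "subgroup E G" and E': "subgroup E' G"
  shows "centralizer_in B (E <#> E') = centralizer_in B E \<inter> centralizer_in B E'"
proof
  have EG: "E \<subseteq> carrier G" and E'G: "E' \<subseteq> carrier G"
    using E E' subgroup.subset by auto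
  show "centralizer_in B (E <#> E') \<subseteq> centralizer_in B E \<inter> centralizer_in B E'"
    using centralizer_in_antimono subset_set_mult_left[OF EG E'] subset_set_mult_right[OF E'G E]
    by blast
  show "centralizer_in B E \<inter> centralizer_in B E' \<subseteq> centralizer_in B (E <#> E')"
  proof
    fix c assume c: "c \<in> centralizer_in B E \<inter> centralizer_in B E'"
    then have cG: "c \<in> carrier G"
      using BG centralizer_in_subset by blast
    have "c \<otimes> u = u \<otimes> c" if "u \<in> E <#> E'" for u
    proof -
      obtain e e' where e: "e \<in> E" and e': "e' \<in> E'" and u: "u = e \<otimes> e'"
        using \<open>u \<in> E <#> E'\<close> unfolding set_mult_def by auto
      have "e \<in> carrier G" "e' \<in> carrier G"
        using e e' EG E'G by auto
      moreover have "c \<otimes> e = e \<otimes> c" and "c \<otimes> e' = e' \<otimes> c"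
        using c e e' unfolding centralizer_in_def by auto
      ultimately show ?thesis
        using u cG by (metis m_assoc)
    qed
    then show "c \<in> centralizer_in B (E <#> E')"
      using c unfolding centralizer_in_def by blast
  qed
qed

lemma commute_generate:
  assumes "S \<subseteq> carrier G" and "c \<in> carrier G"
    and "\<And>s. s \<in> S \<Longrightarrow> c \<otimes> s = s \<otimes> c" and "x \<in> generate G S"
  shows "c \<otimes> x = x \<otimes> c"
proof -
  have "generate G S \<subseteq> centralizer_in (carrier G) {c}"
  proof (rule generate_subgroup_incl)
    show "S \<subseteq> centralizer_in (carrier G) {c}"
      using assms(1,3) unfolding centralizer_in_def by auto
    show "subgroup (centralizer_in (carrier G) {c}) G"
      using subgroup_centralizer_in[OF subgroup_self] assms(2) by blast
  qed
  then show ?thesis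
    using assms(4) unfolding centralizer_in_def by auto
qed

section \<open>Conjugates and commutators\<close>

definition conjugate :: "'a \<Rightarrow> 'a \<Rightarrow> 'a"
  where "conjugate g x = g \<otimes> x \<otimes> inv g"

definition commutator :: "'a \<Rightarrow> 'a \<Rightarrow> 'a"
  where "commutator x y = x \<otimes> y \<otimes> inv x \<otimes> inv y"

lemma conjugate_closed [simp]:
  "g \<in> carrier G \<Longrightarrow> x \<in> carrier G \<Longrightarrow> conjugate g x \<in> carrier G"
  unfolding conjugate_def by simp

lemma commutator_closed [simp]:
  "x \<in> carrier G \<Longrightarrow> y \<in> carrier G \<Longrightarrow> commutator x y \<in> carrier G"
  unfolding commutator_def by simp

lemma conjugate_one: "x \<in> carrier G \<Longrightarrow> conjugate \<one> x = x"
  unfolding conjugate_def by simp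

lemma conjugate_conjugate:
  "g \<in> carrier G \<Longrightarrow> h \<in> carrier G \<Longrightarrow> x \<in> carrier G
    \<Longrightarrow> conjugate g (conjugate h x) = conjugate (g \<otimes> h) x"
  unfolding conjugate_def by (simp add: group_cancel_simps)

lemma conjugate_mult:
  "g \<in> carrier G \<Longrightarrow> x \<in> carrier G \<Longrightarrow> y \<in> carrier G
    \<Longrightarrow> conjugate g (x \<otimes> y) = conjugate g x \<otimes> conjugate g y"
  unfolding conjugate_def by (simp add: group_cancel_simps)

lemma conjugate_commutator:
  "g \<in> carrier G \<Longrightarrow> x \<in> carrier G \<Longrightarrow> y \<in> carrier G
    \<Longrightarrow> conjugate g (commutator x y) = commutator (conjugate g x) (conjugate g y)"
  unfolding conjugate_def commutator_def by (simp add: group_cancel_simps)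

lemma conjugate_commutator_eq_mult_conjugate:
  "g \<in> carrier G \<Longrightarrow> x \<in> carrier G \<Longrightarrow> y \<in> carrier G
    \<Longrightarrow> conjugate g (commutator x y) = conjugate g x \<otimes> conjugate (g \<otimes> y) (inv x)"
  unfolding conjugate_def commutator_def by (simp add: group_cancel_simps)

lemma conjugate_commutator_eq_mult_commutator:
  "g \<in> carrier G \<Longrightarrow> x \<in> carrier G \<Longrightarrow> y \<in> carrier G
    \<Longrightarrow> conjugate g (commutator x y) = inv (commutator x g) \<otimes> commutator x (g \<otimes> y)"
  unfolding conjugate_def commutator_def by (simp add: group_cancel_simps)

lemma conjugate_eq_mult_commutator:
  "g \<in> carrier G \<Longrightarrow> x \<in> carrier G \<Longrightarrow> conjugate g x = x \<otimes> commutator (inv x) g"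
  unfolding conjugate_def commutator_def by (simp add: group_cancel_simps)

lemma commutator_eq_mult_conjugate:
  "x \<in> carrier G \<Longrightarrow> g \<in> carrier G \<Longrightarrow> commutator x g = x \<otimes> conjugate g (inv x)"
  unfolding conjugate_def commutator_def by (simp add: group_cancel_simps)

lemma subgroup_conjugate_image:
  assumes "subgroup B G" and "g \<in> carrier G"
  shows "subgroup (conjugate g ` B) G"
proof -
  have "conjugate g ` B = g <# B #> inv g"
    unfolding conjugate_def l_coset_def r_coset_def by auto
  then show ?thesis
    using subgroup_conjugation_is_surj2[OF assms(2,1)] by simp
qed

lemma abelian_set_conjugate_image:
  assumes BG: "B \<subseteq> carrier G" and "abelian_set G B" and g: "g \<in> carrier G"
  shows "abelian_set G (conjugate g ` B)"
  unfolding abelian_set_def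
proof (intro ballI)
  fix x y assume "x \<in> conjugate g ` B" "y \<in> conjugate g ` B"
  then obtain b b' where b: "b \<in> B" and b': "b' \<in> B" and x: "x = conjugate g b" and y: "y = conjugate g b'"
    by auto
  have "b \<otimes> b' = b' \<otimes> b"
    using \<open>abelian_set G B\<close> b b' unfolding abelian_set_def by blast
  then show "x \<otimes> y = y \<otimes> x"
    using x y b b' BG g by (metis conjugate_mult subsetD)
qed

lemma card_conjugate_image:
  assumes "B \<subseteq> carrier G" and "g \<in> carrier G"
  shows "card (conjugate g ` B) = card B"
proof (rule card_image)
  show "inj_on (conjugate g) B"
    using assms conjugation_is_inj unfolding conjugate_def inj_on_def by blast
qed

lemma subgroup_normal_closure:
  assumes "B \<subseteq> carrier G"
  shows "subgroup (normal_closure G B) G"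
  unfolding normal_closure_def using assms by (intro generate_is_subgroup) auto

lemma conjugate_mem_normal_closure:
  assumes "g \<in> carrier G" and "b \<in> B"
  shows "conjugate g b \<in> normal_closure G B"
proof -
  have "conjugate g b = inv (inv g) \<otimes> b \<otimes> inv g"
    using assms(1) unfolding conjugate_def by simp
  then have "conjugate g b \<in> (\<Union>h \<in> carrier G. (\<lambda>b. inv h \<otimes> b \<otimes> h) ` B)"
    using assms by blast
  then show ?thesis
    unfolding normal_closure_def by (rule generate.incl)
qed

lemma subset_normal_closure:
  assumes "B \<subseteq> carrier G"
  shows "B \<subseteq> normal_closure G B"
  using assms conjugate_mem_normal_closure[OF one_closed] conjugate_one by (metis subsetI subsetD)

lemma normal_closure_subset_normal:
  assumes "N \<lhd> G" and "B \<subseteq> N"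
  shows "normal_closure G B \<subseteq> N"
  unfolding normal_closure_def
proof (rule generate_subgroup_incl)
  show "subgroup N G"
    using assms(1) by (rule normal_imp_subgroup)
  show "(\<Union>g \<in> carrier G. (\<lambda>b. inv g \<otimes> b \<otimes> g) ` B) \<subseteq> N"
    using assms normal.inv_op_closed1 by fastforce
qed

end

section \<open>Abelian subgroups of maximal order\<close>

lemma mult_le_bound_eq:
  fixes a x y :: nat
  assumes "a * a \<le> x * y" and "x \<le> a" and "y \<le> a"
  shows "x = a"
proof (rule ccontr)
  assume "x \<noteq> a"
  with assms(2) have "x < a"
    by simp
  have "x * y \<le> x * a"
    using assms(3) by simp
  also have "\<dots> < a * a"
    using \<open>x < a\<close> by simp
  finally show False
    using assms(1) by simp
qed

locale metabelian_max_abelian = group G for G (structure) +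
  fixes N B :: "'a set"
  assumes finite_carrier: "finite (carrier G)"
    and metabelian: "metabelian G"
    and normal_N: "N \<lhd> G"
    and subgroup_B: "subgroup B G"
    and B_subset_N: "B \<subseteq> N"
    and abelian_B: "abelian_set G B"
    and card_le_card_B: "\<And>A. subgroup A G \<Longrightarrow> A \<subseteq> N \<Longrightarrow> abelian_set G A \<Longrightarrow> card A \<le> card B"
begin

lemma B_subset_carrier: "B \<subseteq> carrier G"
  using subgroup.subset[OF subgroup_B] .

text \<open>The subgroup \<open>[B,G]\<close> is normal, so generating it by all conjugates of the commutators
  \<open>[b,g]\<close> yields the same subgroup and makes its normality immediate.\<close>

definition comm_BG_generators :: "'a set"
  where "comm_BG_generators =
    {conjugate h (commutator b g) | b g h. b \<in> B \<and> g \<in> carrier G \<and> h \<in> carrier G}"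

definition comm_BG :: "'a set"
  where "comm_BG = generate G comm_BG_generators"

lemma comm_BG_generators_subset_carrier: "comm_BG_generators \<subseteq> carrier G"
  unfolding comm_BG_generators_def using B_subset_carrier by auto

lemma subgroup_comm_BG: "subgroup comm_BG G"
  unfolding comm_BG_def by (rule generate_is_subgroup[OF comm_BG_generators_subset_carrier])

lemma comm_BG_subset_carrier: "comm_BG \<subseteq> carrier G"
  using subgroup.subset[OF subgroup_comm_BG] .

lemma normal_comm_BG: "comm_BG \<lhd> G"
  unfolding comm_BG_def
proof (rule normal_generateI[OF comm_BG_generators_subset_carrier])
  fix t x assume "t \<in> comm_BG_generators" and x: "x \<in> carrier G"
  then obtain b g h where b: "b \<in> B" and g: "g \<in> carrier G" and h: "h \<in> carrier G"
    and t: "t = conjugate h (commutator b g)"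
    unfolding comm_BG_generators_def by auto
  have "x \<otimes> t \<otimes> inv x = conjugate (x \<otimes> h) (commutator b g)"
    using x h g b B_subset_carrier
    by (simp add: t conjugate_conjugate[symmetric] conjugate_def[of x] subsetD)
  then show "x \<otimes> t \<otimes> inv x \<in> comm_BG_generators"
    unfolding comm_BG_generators_def using b g h x by blast
qed

lemma commutator_mem_comm_BG:
  assumes "b \<in> B" and "g \<in> carrier G"
  shows "commutator b g \<in> comm_BG"
proof -
  have "commutator b g = conjugate \<one> (commutator b g)"
    using assms B_subset_carrier by (simp add: conjugate_one subsetD)
  then have "commutator b g \<in> comm_BG_generators"
    unfolding comm_BG_generators_def using assms by blast
  then show ?thesis
    unfolding comm_BG_def by (rule generate.incl)
qed

lemma comm_BG_commute:
  assumes "x \<in> comm_BG" and "y \<in> comm_BG"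
  shows "x \<otimes> y = y \<otimes> x"
proof -
  have "comm_BG_generators \<subseteq> derived_set G (carrier G)"
  proof
    fix t assume "t \<in> comm_BG_generators"
    then obtain b g h where b: "b \<in> B" and g: "g \<in> carrier G" and h: "h \<in> carrier G"
      and t: "t = conjugate h (commutator b g)"
      unfolding comm_BG_generators_def by auto
    have bG: "b \<in> carrier G"
      using b B_subset_carrier by blast
    have "t = commutator (conjugate h b) (conjugate h g)"
      using t conjugate_commutator h bG g by simp
    then show "t \<in> derived_set G (carrier G)"
      unfolding commutator_def using h bG g conjugate_closed by blast
  qed
  then have "comm_BG \<subseteq> derived G (carrier G)"
    unfolding comm_BG_def derived_def by (rule mono_generate)
  then show ?thesis
    using metabelian assms unfolding metabelian_def by blast
qed

lemma comm_BG_subset_normal_closure: "comm_BG \<subseteq> normal_closure G B"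
  unfolding comm_BG_def
proof (rule generate_subgroup_incl)
  show "subgroup (normal_closure G B) G"
    by (rule subgroup_normal_closure[OF B_subset_carrier])
  show "comm_BG_generators \<subseteq> normal_closure G B"
  proof
    fix t assume "t \<in> comm_BG_generators"
    then obtain b g h where b: "b \<in> B" and g: "g \<in> carrier G" and h: "h \<in> carrier G"
      and t: "t = conjugate h (commutator b g)"
      unfolding comm_BG_generators_def by auto
    have "t = conjugate h b \<otimes> conjugate (h \<otimes> g) (inv b)"
      using t conjugate_commutator_eq_mult_conjugate h g b B_subset_carrier by blast
    moreover have "inv b \<in> B"
      using subgroup.m_inv_closed[OF subgroup_B b] .
    ultimately show "t \<in> normal_closure G B"
      using conjugate_mem_normal_closure h g b
        subgroup.m_closed[OF subgroup_normal_closure[OF B_subset_carrier]] by simp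
  qed
qed

lemma comm_BG_subset_N: "comm_BG \<subseteq> N"
  using comm_BG_subset_normal_closure normal_closure_subset_normal[OF normal_N B_subset_N] by blast

definition intermediate :: "'a set \<Rightarrow> bool"
  where "intermediate E \<longleftrightarrow> subgroup E G \<and> B \<inter> comm_BG \<subseteq> E \<and> E \<subseteq> comm_BG"

definition weight :: "'a set \<Rightarrow> nat"
  where "weight E = card (centralizer_in B E) * card E"

definition extremal :: "'a set \<Rightarrow> bool"
  where "extremal E \<longleftrightarrow> intermediate E \<and> weight E = card B * card (B \<inter> comm_BG)"

lemma card_B_Int_comm_BG_pos: "card (B \<inter> comm_BG) > 0"
  using subgroup.finite_imp_card_positive[OF subgroups_Inter_pair[OF subgroup_B subgroup_comm_BG]]
    finite_carrier by blast

lemma centralizer_mult_abelian_subgroup: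
  assumes E: "subgroup E G" and "E \<subseteq> comm_BG"
  shows "subgroup (centralizer_in B E <#> E) G"
    and "abelian_set G (centralizer_in B E <#> E)"
    and "centralizer_in B E <#> E \<subseteq> N"
proof -
  have EG: "E \<subseteq> carrier G"
    using subgroup.subset[OF E] .
  have C: "subgroup (centralizer_in B E) G"
    by (rule subgroup_centralizer_in[OF subgroup_B EG])
  have commute: "c \<otimes> e = e \<otimes> c" if "c \<in> centralizer_in B E" "e \<in> E" for c e
    using that unfolding centralizer_in_def by blast
  show "subgroup (centralizer_in B E <#> E) G"
    by (rule subgroup_set_mult_commuting[OF C E commute])
  have "abelian_set G (centralizer_in B E)"
    using abelian_B centralizer_in_subset unfolding abelian_set_def by blast
  moreover have "abelian_set G E"
    using comm_BG_commute \<open>E \<subseteq> comm_BG\<close> unfolding abelian_set_def by blast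
  ultimately show "abelian_set G (centralizer_in B E <#> E)"
    using abelian_set_set_mult[OF subgroup.subset[OF C] EG _ _ commute] by blast
  show "centralizer_in B E <#> E \<subseteq> N"
    using set_mult_subset_subgroup[OF normal_imp_subgroup[OF normal_N]] centralizer_in_subset
      B_subset_N \<open>E \<subseteq> comm_BG\<close> comm_BG_subset_N by (meson subset_trans)
qed

lemma centralizer_in_Int_intermediate:
  assumes "intermediate E"
  shows "centralizer_in B E \<inter> E = B \<inter> comm_BG"
proof
  show "centralizer_in B E \<inter> E \<subseteq> B \<inter> comm_BG"
    using assms centralizer_in_subset unfolding intermediate_def by blast
  show "B \<inter> comm_BG \<subseteq> centralizer_in B E \<inter> E"
    using assms comm_BG_commute unfolding intermediate_def centralizer_in_def by blast
qed

lemma card_centralizer_mult: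
  assumes E: "intermediate E"
  shows "card (centralizer_in B E <#> E) * card (B \<inter> comm_BG) = weight E"
proof -
  have "subgroup E G"
    using E unfolding intermediate_def by blast
  then have "subgroup (centralizer_in B E) G"
    by (intro subgroup_centralizer_in[OF subgroup_B] subgroup.subset)
  then show ?thesis
    using card_set_mult_mult_card_Int[OF _ \<open>subgroup E G\<close> finite_carrier]
      centralizer_in_Int_intermediate[OF E] unfolding weight_def by metis
qed

lemma weight_le_bound:
  assumes E: "intermediate E"
  shows "weight E \<le> card B * card (B \<inter> comm_BG)"
proof -
  have "subgroup E G" and "E \<subseteq> comm_BG"
    using E unfolding intermediate_def by blast+
  then have "card (centralizer_in B E <#> E) \<le> card B"
    using card_le_card_B centralizer_mult_abelian_subgroup by blast
  then show ?thesis
    using card_centralizer_mult[OF E] by (metis mult_le_mono1)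
qed

lemma intermediate_set_mult:
  assumes E: "intermediate E" and E': "intermediate E'"
  shows "intermediate (E <#> E')"
proof -
  have sub: "subgroup E G" "subgroup E' G" and in_comm: "E \<subseteq> comm_BG" "E' \<subseteq> comm_BG"
    and "B \<inter> comm_BG \<subseteq> E"
    using E E' unfolding intermediate_def by blast+
  have "subgroup (E <#> E') G"
    using sub in_comm comm_BG_commute by (intro subgroup_set_mult_commuting) blast+
  moreover have "E <#> E' \<subseteq> comm_BG"
    using set_mult_subset_subgroup[OF subgroup_comm_BG in_comm] .
  moreover have "E \<subseteq> E <#> E'"
    using subset_set_mult_left[OF subgroup.subset[OF sub(1)] sub(2)] .
  ultimately show ?thesis
    unfolding intermediate_def using \<open>B \<inter> comm_BG \<subseteq> E\<close> by blast
qed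

lemma intermediate_Int:
  assumes "intermediate E" and "intermediate E'"
  shows "intermediate (E \<inter> E')"
  using assms subgroups_Inter_pair unfolding intermediate_def by blast

lemma weight_supermodular:
  assumes E: "intermediate E" and E': "intermediate E'"
  shows "weight E * weight E' \<le> weight (E <#> E') * weight (E \<inter> E')"
proof -
  let ?C = "centralizer_in B E" and ?C' = "centralizer_in B E'"
  have sub: "subgroup E G" "subgroup E' G"
    using E E' unfolding intermediate_def by blast+
  have subC: "subgroup ?C G" "subgroup ?C' G"
    using subgroup_centralizer_in[OF subgroup_B subgroup.subset] sub by blast+
  have "?C <#> ?C' \<subseteq> centralizer_in B (E \<inter> E')"
  proof (rule set_mult_subset_subgroup)
    show "subgroup (centralizer_in B (E \<inter> E')) G"
      using subgroup_centralizer_in[OF subgroup_B] subgroup.subset[OF sub(1)] by blast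
  qed (intro centralizer_in_antimono Int_lower1 Int_lower2)+
  then have C_le: "card (?C <#> ?C') \<le> card (centralizer_in B (E \<inter> E'))"
    using finite_subset[OF centralizer_in_subset finite_subset[OF B_subset_carrier finite_carrier]]
    by (rule card_mono[rotated])
  have "weight E * weight E' = (card ?C * card ?C') * (card E * card E')"
    unfolding weight_def by (simp only: ac_simps)
  also have "\<dots> = (card (?C <#> ?C') * card (?C \<inter> ?C')) * (card (E <#> E') * card (E \<inter> E'))"
    by (simp only: card_set_mult_mult_card_Int[OF subC finite_carrier]
        card_set_mult_mult_card_Int[OF sub finite_carrier])
  also have "\<dots> = (card (?C \<inter> ?C') * card (E <#> E')) * (card (?C <#> ?C') * card (E \<inter> E'))"
    by (simp only: ac_simps)
  also have "\<dots> \<le> (card (?C \<inter> ?C') * card (E <#> E')) * (card (centralizer_in B (E \<inter> E')) * card (E \<inter> E'))"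
    using C_le by (intro mult_le_mono2 mult_le_mono1)
  also have "\<dots> = weight (E <#> E') * weight (E \<inter> E')"
    unfolding weight_def centralizer_in_set_mult[OF B_subset_carrier sub] ..
  finally show ?thesis .
qed

lemma extremal_set_mult:
  assumes E: "extremal E" and E': "extremal E'"
  shows "extremal (E <#> E')"
proof -
  let ?bound = "card B * card (B \<inter> comm_BG)"
  have int: "intermediate E" "intermediate E'"
    using E E' unfolding extremal_def by blast+
  have "?bound * ?bound \<le> weight (E <#> E') * weight (E \<inter> E')"
    using weight_supermodular[OF int] E E' unfolding extremal_def by simp
  moreover have "weight (E <#> E') \<le> ?bound" and "weight (E \<inter> E') \<le> ?bound"
    using weight_le_bound intermediate_set_mult[OF int] intermediate_Int[OF int] by blast+
  ultimately have "weight (E <#> E') = ?bound"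
    by (rule mult_le_bound_eq)
  then show ?thesis
    unfolding extremal_def using intermediate_set_mult[OF int] by blast
qed

definition join_conjugate :: "'a \<Rightarrow> 'a set"
  where "join_conjugate g = generate G (B \<union> conjugate g ` B)"

lemma
  assumes "g \<in> carrier G"
  shows subgroup_join_conjugate: "subgroup (join_conjugate g) G"
    and B_subset_join_conjugate: "B \<subseteq> join_conjugate g"
    and conjugate_image_subset_join_conjugate: "conjugate g ` B \<subseteq> join_conjugate g"
proof -
  have "B \<union> conjugate g ` B \<subseteq> carrier G"
    using B_subset_carrier assms by auto
  then show "subgroup (join_conjugate g) G"
    unfolding join_conjugate_def by (rule generate_is_subgroup)
  show "B \<subseteq> join_conjugate g" and "conjugate g ` B \<subseteq> join_conjugate g"
    unfolding join_conjugate_def by (auto intro: generate.incl)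
qed

lemma intermediate_comm_BG_Int_join_conjugate:
  assumes "g \<in> carrier G"
  shows "intermediate (comm_BG \<inter> join_conjugate g)"
  using subgroups_Inter_pair[OF subgroup_comm_BG subgroup_join_conjugate[OF assms]]
    B_subset_join_conjugate[OF assms] unfolding intermediate_def by blast

lemma commutator_mem_comm_BG_Int_join_conjugate:
  assumes g: "g \<in> carrier G" and b: "b \<in> B"
  shows "commutator b g \<in> comm_BG \<inter> join_conjugate g"
proof -
  have "commutator b g = b \<otimes> conjugate g (inv b)"
    using b g B_subset_carrier commutator_eq_mult_conjugate by blast
  moreover have "conjugate g (inv b) \<in> join_conjugate g"
    using conjugate_image_subset_join_conjugate[OF g] subgroup.m_inv_closed[OF subgroup_B b] by blast
  ultimately have "commutator b g \<in> join_conjugate g"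
    using b B_subset_join_conjugate[OF g] subgroup.m_closed[OF subgroup_join_conjugate[OF g]]
    by (metis subsetD)
  then show ?thesis
    using commutator_mem_comm_BG[OF b g] by blast
qed

lemma subgroup_B_set_mult_comm_BG_Int_join_conjugate:
  assumes g: "g \<in> carrier G"
  shows "subgroup (B <#> (comm_BG \<inter> join_conjugate g)) G"
proof (rule subgroup_set_mult_normalizing[OF subgroup_B])
  let ?K = "join_conjugate g"
  show "subgroup (comm_BG \<inter> ?K) G"
    using subgroups_Inter_pair[OF subgroup_comm_BG subgroup_join_conjugate[OF g]] .
  fix b e assume b: "b \<in> B" and e: "e \<in> comm_BG \<inter> ?K"
  have "b \<otimes> e \<otimes> inv b \<in> comm_BG"
    using normal.inv_op_closed2[OF normal_comm_BG] b e B_subset_carrier by blast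
  moreover have "b \<in> ?K" and "e \<in> ?K"
    using b e B_subset_join_conjugate[OF g] by blast+
  then have "b \<otimes> e \<otimes> inv b \<in> ?K"
    using subgroup_join_conjugate[OF g] by (meson subgroup.m_closed subgroup.m_inv_closed)
  ultimately show "b \<otimes> e \<otimes> inv b \<in> comm_BG \<inter> ?K"
    by blast
qed

lemma conjugate_image_subset_B_set_mult:
  assumes g: "g \<in> carrier G"
  shows "conjugate g ` B \<subseteq> B <#> (comm_BG \<inter> join_conjugate g)"
proof
  fix x assume "x \<in> conjugate g ` B"
  then obtain b where b: "b \<in> B" and x: "x = conjugate g b"
    by blast
  have "x = b \<otimes> commutator (inv b) g"
    using x g b B_subset_carrier conjugate_eq_mult_commutator by blast
  moreover have "commutator (inv b) g \<in> comm_BG \<inter> join_conjugate g"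
    using commutator_mem_comm_BG_Int_join_conjugate[OF g] subgroup.m_inv_closed[OF subgroup_B b] .
  ultimately show "x \<in> B <#> (comm_BG \<inter> join_conjugate g)"
    unfolding set_mult_def using b by blast
qed

lemma B_Int_conjugate_image_subset_centralizer_in:
  assumes g: "g \<in> carrier G"
  shows "B \<inter> conjugate g ` B \<subseteq> centralizer_in B (comm_BG \<inter> join_conjugate g)"
proof
  fix c assume c: "c \<in> B \<inter> conjugate g ` B"
  have "c \<otimes> s = s \<otimes> c" if "s \<in> B \<union> conjugate g ` B" for s
    using c that abelian_B abelian_set_conjugate_image[OF B_subset_carrier abelian_B g]
    unfolding abelian_set_def by blast
  moreover have "B \<union> conjugate g ` B \<subseteq> carrier G" and "c \<in> carrier G"
    using c g B_subset_carrier by auto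
  ultimately have "c \<otimes> x = x \<otimes> c" if "x \<in> join_conjugate g" for x
    using commute_generate that unfolding join_conjugate_def by blast
  then show "c \<in> centralizer_in B (comm_BG \<inter> join_conjugate g)"
    using c unfolding centralizer_in_def by blast
qed

lemma extremal_comm_BG_Int_join_conjugate:
  assumes g: "g \<in> carrier G"
  shows "extremal (comm_BG \<inter> join_conjugate g)"
proof -
  let ?E = "comm_BG \<inter> join_conjugate g" and ?Bg = "conjugate g ` B"
  have int: "intermediate ?E"
    using intermediate_comm_BG_Int_join_conjugate[OF g] .
  have sub_E: "subgroup ?E G"
    using int unfolding intermediate_def by blast
  have sub_BE: "subgroup (B <#> ?E) G"
    using subgroup_B_set_mult_comm_BG_Int_join_conjugate[OF g] .
  have "B <#> ?Bg \<subseteq> B <#> ?E"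
    using set_mult_subset_subgroup[OF sub_BE subset_set_mult_left[OF B_subset_carrier sub_E]
        conjugate_image_subset_B_set_mult[OF g]] .
  then have le_mult: "card (B <#> ?Bg) \<le> card (B <#> ?E)"
    using finite_subset[OF subgroup.subset[OF sub_BE] finite_carrier] by (rule card_mono[rotated])
  have le_Int: "card (B \<inter> ?Bg) \<le> card (centralizer_in B ?E)"
    using B_Int_conjugate_image_subset_centralizer_in[OF g]
      finite_subset[OF centralizer_in_subset finite_subset[OF B_subset_carrier finite_carrier]]
    by (rule card_mono[rotated])
  have prod_Bg: "card (B <#> ?Bg) * card (B \<inter> ?Bg) = card B * card B"
    using card_set_mult_mult_card_Int[OF subgroup_B subgroup_conjugate_image[OF subgroup_B g]
        finite_carrier] card_conjugate_image[OF B_subset_carrier g] by simp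
  have "B \<inter> ?E = B \<inter> comm_BG"
    using B_subset_join_conjugate[OF g] by blast
  then have prod_E: "card (B <#> ?E) * card (B \<inter> comm_BG) = card B * card ?E"
    using card_set_mult_mult_card_Int[OF subgroup_B sub_E finite_carrier] by simp
  have "card B * (card B * card (B \<inter> comm_BG))
      = card (B <#> ?Bg) * card (B \<inter> ?Bg) * card (B \<inter> comm_BG)"
    using prod_Bg by simp
  also have "\<dots> \<le> card (B <#> ?E) * card (centralizer_in B ?E) * card (B \<inter> comm_BG)"
    using le_mult le_Int by (intro mult_le_mono1 mult_le_mono)
  also have "\<dots> = card B * weight ?E"
    using prod_E unfolding weight_def by (simp add: ac_simps)
  finally have "card B * card (B \<inter> comm_BG) \<le> weight ?E"
    using subgroup.finite_imp_card_positive[OF subgroup_B finite_carrier] by simp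
  then show ?thesis
    unfolding extremal_def using int weight_le_bound[OF int] by simp
qed

lemma extremal_containing_commutators:
  assumes "finite F" and "F \<subseteq> carrier G"
  shows "\<exists>E. extremal E \<and> (\<forall>g\<in>F. \<forall>b\<in>B. commutator b g \<in> E)"
  using assms
proof (induction F rule: finite_induct)
  case empty
  have "centralizer_in B (B \<inter> comm_BG) = B"
    using abelian_B unfolding centralizer_in_def abelian_set_def by blast
  then have "extremal (B \<inter> comm_BG)"
    unfolding extremal_def intermediate_def weight_def
    using subgroups_Inter_pair[OF subgroup_B subgroup_comm_BG] by simp
  then show ?case
    by blast
next
  case (insert g F)
  then obtain E where E: "extremal E" and comm_E: "\<forall>h\<in>F. \<forall>b\<in>B. commutator b h \<in> E"
    by auto
  have g: "g \<in> carrier G"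
    using insert.prems by blast
  let ?E' = "comm_BG \<inter> join_conjugate g"
  have sub: "subgroup E G" "subgroup ?E' G"
    using E extremal_comm_BG_Int_join_conjugate[OF g] unfolding extremal_def intermediate_def
    by blast+
  have "E \<subseteq> E <#> ?E'" and "?E' \<subseteq> E <#> ?E'"
    using subset_set_mult_left[OF subgroup.subset[OF sub(1)] sub(2)]
      subset_set_mult_right[OF subgroup.subset[OF sub(2)] sub(1)] .
  then have "\<forall>h\<in>insert g F. \<forall>b\<in>B. commutator b h \<in> E <#> ?E'"
    using comm_E commutator_mem_comm_BG_Int_join_conjugate[OF g] by blast
  moreover have "extremal (E <#> ?E')"
    using extremal_set_mult[OF E extremal_comm_BG_Int_join_conjugate[OF g]] .
  ultimately show ?case
    by blast
qed

lemma extremal_comm_BG: "extremal comm_BG"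
proof -
  obtain E where E: "extremal E" and comm_E: "\<forall>g\<in>carrier G. \<forall>b\<in>B. commutator b g \<in> E"
    using extremal_containing_commutators[OF finite_carrier subset_refl] by blast
  have sub_E: "subgroup E G" and "E \<subseteq> comm_BG"
    using E unfolding extremal_def intermediate_def by blast+
  have "comm_BG_generators \<subseteq> E"
  proof
    fix t assume "t \<in> comm_BG_generators"
    then obtain b g h where b: "b \<in> B" and g: "g \<in> carrier G" and h: "h \<in> carrier G"
      and t: "t = conjugate h (commutator b g)"
      unfolding comm_BG_generators_def by auto
    have "t = inv (commutator b h) \<otimes> commutator b (h \<otimes> g)"
      using t conjugate_commutator_eq_mult_commutator h g b B_subset_carrier by blast
    then show "t \<in> E"
      using comm_E b g h subgroup.m_closed[OF sub_E] subgroup.m_inv_closed[OF sub_E] by simp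
  qed
  then have "comm_BG \<subseteq> E"
    unfolding comm_BG_def by (rule generate_subgroup_incl[OF _ sub_E])
  then show ?thesis
    using E \<open>E \<subseteq> comm_BG\<close> by (metis subset_antisym)
qed

lemma normal_centralizer_mult_comm_BG: "centralizer_in B comm_BG <#> comm_BG \<lhd> G"
proof (rule normal_invI)
  show "subgroup (centralizer_in B comm_BG <#> comm_BG) G"
    using centralizer_mult_abelian_subgroup(1)[OF subgroup_comm_BG subset_refl] .
  fix x c assume x: "x \<in> carrier G" and "c \<in> centralizer_in B comm_BG <#> comm_BG"
  then obtain z d where z: "z \<in> centralizer_in B comm_BG" and d: "d \<in> comm_BG" and c: "c = z \<otimes> d"
    unfolding set_mult_def by auto
  have zB: "z \<in> B"
    using z centralizer_in_subset by blast
  have G: "z \<in> carrier G" "d \<in> carrier G"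
    using zB d B_subset_carrier comm_BG_subset_carrier by auto
  have "x \<otimes> c \<otimes> inv x = conjugate x (z \<otimes> d)"
    unfolding c conjugate_def ..
  also have "\<dots> = conjugate x z \<otimes> conjugate x d"
    by (rule conjugate_mult[OF x G])
  also have "\<dots> = z \<otimes> (commutator (inv z) x \<otimes> conjugate x d)"
    using x G by (simp add: conjugate_eq_mult_commutator m_assoc)
  finally have c_conj: "x \<otimes> c \<otimes> inv x = z \<otimes> (commutator (inv z) x \<otimes> conjugate x d)" .
  have "commutator (inv z) x \<in> comm_BG"
    using commutator_mem_comm_BG[OF subgroup.m_inv_closed[OF subgroup_B zB] x] .
  moreover have "conjugate x d \<in> comm_BG"
    unfolding conjugate_def using normal.inv_op_closed2[OF normal_comm_BG x d] .
  ultimately have "commutator (inv z) x \<otimes> conjugate x d \<in> comm_BG"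
    by (rule subgroup.m_closed[OF subgroup_comm_BG])
  then show "x \<otimes> c \<otimes> inv x \<in> centralizer_in B comm_BG <#> comm_BG"
    unfolding c_conj set_mult_def using z by blast
qed

end

theorem mainTheorem19:
  fixes G :: "('a, 'b) monoid_scheme" and N B :: "'a set"
  assumes "group G"
    and "finite (carrier G)"
    and "metabelian G"
    and "N \<lhd> G"
    and "subgroup B G" and "B \<subseteq> N" and "abelian_set G B"
    and "\<And>A. subgroup A G \<Longrightarrow> A \<subseteq> N \<Longrightarrow> abelian_set G A \<Longrightarrow> card A \<le> card B"
  shows "\<exists>C. C \<lhd> G \<and> abelian_set G C \<and> C \<subseteq> normal_closure G B
             \<and> normal_closure G B \<subseteq> N \<and> card C = card B"
proof -
  interpret metabelian_max_abelian G N B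
    using assms by (simp add: metabelian_max_abelian_def metabelian_max_abelian_axioms_def)
  let ?C = "centralizer_in B comm_BG <#>\<^bsub>G\<^esub> comm_BG"
  have "card ?C * card (B \<inter> comm_BG) = card B * card (B \<inter> comm_BG)"
    using card_centralizer_mult extremal_comm_BG unfolding extremal_def by simp
  then have "card ?C = card B"
    using card_B_Int_comm_BG_pos by simp
  moreover have "?C \<subseteq> normal_closure G B"
    using set_mult_subset_subgroup[OF subgroup_normal_closure[OF B_subset_carrier]]
      centralizer_in_subset subset_normal_closure[OF B_subset_carrier]
      comm_BG_subset_normal_closure by (meson subset_trans)
  ultimately show ?thesis
    using normal_centralizer_mult_comm_BG normal_closure_subset_normal[OF assms(4,6)]
      centralizer_mult_abelian_subgroup(2)[OF subgroup_comm_BG subset_refl] by blast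
qed

end
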